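(* $\operatorname{RBM}_{3,2}\subseteq\mathcal{M}_{3,3}$.
   Context: A distribution of three binary random variables is a $2\times2\times2$ tensor $p=(p_{ijk})_{i,j,k\in\{0,1\}}$ with nonnegative entries summing to $1$; the set of these is the simplex $\Delta_7$. For $a,b,c\in\mathbb{R}^2_{\ge0}$, $a\otimes b\otimes c$ is the tensor with entries $a_ib_jc_k$. $\mathcal{M}_{3,3}$ is the set of $p\in\Delta_7$ that are a sum of three tensors of the form $a\otimes b\otimes c$ with $a,b,c\in\mathbb{R}^2_{\ge0}$. $\operatorname{RBM}_{3,2}$ is the set of $p\in\Delta_7$ of the form $p=(a_1\otimes b_1\otimes c_1+d_1\otimes e_1\otimes f_1)*(a_2\otimes b_2\otimes c_2+d_2\otimes e_2\otimes f_2)$ with all vectors in $\mathbb{R}^2_{\ge0}$, where $*$ is the entrywise (Hadamard) product. *)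

theory Defs
  imports Main "HOL-Analysis.Analysis"
begin

text \<open>Vectors in R^2 are indexed by bool (False ~ 0, True ~ 1);
  2x2x2 tensors are functions bool => bool => bool => real.\<close>

type_synonym vec2 = "bool \<Rightarrow> real"
type_synonym tensor3 = "bool \<Rightarrow> bool \<Rightarrow> bool \<Rightarrow> real"

definition nonneg2 :: "vec2 \<Rightarrow> bool" where
  "nonneg2 a \<longleftrightarrow> (\<forall>i. 0 \<le> a i)"

definition outer3 :: "vec2 \<Rightarrow> vec2 \<Rightarrow> vec2 \<Rightarrow> tensor3" where
  "outer3 a b c = (\<lambda>i j k. a i * b j * c k)"

definition simplex7 :: "tensor3 set" where
  "simplex7 = {p. (\<forall>i j k. 0 \<le> p i j k) \<and> (\<Sum>i\<in>UNIV. \<Sum>j\<in>UNIV. \<Sum>k\<in>UNIV. p i j k) = 1}"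

definition M33 :: "tensor3 set" where
  "M33 = {p \<in> simplex7. \<exists>a1 b1 c1 a2 b2 c2 a3 b3 c3.
      nonneg2 a1 \<and> nonneg2 b1 \<and> nonneg2 c1 \<and>
      nonneg2 a2 \<and> nonneg2 b2 \<and> nonneg2 c2 \<and>
      nonneg2 a3 \<and> nonneg2 b3 \<and> nonneg2 c3 \<and>
      p = (\<lambda>i j k. outer3 a1 b1 c1 i j k + outer3 a2 b2 c2 i j k + outer3 a3 b3 c3 i j k)}"

definition RBM32 :: "tensor3 set" where
  "RBM32 = {p \<in> simplex7. \<exists>a1 b1 c1 d1 e1 f1 a2 b2 c2 d2 e2 f2.
      nonneg2 a1 \<and> nonneg2 b1 \<and> nonneg2 c1 \<and>
      nonneg2 d1 \<and> nonneg2 e1 \<and> nonneg2 f1 \<and>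
      nonneg2 a2 \<and> nonneg2 b2 \<and> nonneg2 c2 \<and>
      nonneg2 d2 \<and> nonneg2 e2 \<and> nonneg2 f2 \<and>
      p = (\<lambda>i j k. (outer3 a1 b1 c1 i j k + outer3 d1 e1 f1 i j k) *
                   (outer3 a2 b2 c2 i j k + outer3 d2 e2 f2 i j k))}"

end

theory Submission
  imports Defs
begin

text \<open>A nonnegative 2x2x2 tensor whose two slices (in some direction) have determinants of the
  same sign has nonnegative rank at most three: after flipping one coordinate both determinants
  are nonnegative, and a nonnegative 2x2 matrix with nonnegative determinant is a nonnegative
  multiple of a corner unit matrix plus a nonnegative rank-one matrix; the two corner terms then
  combine into a single rank-one tensor.
  For p = q1 * q2 with q1, q2 sums of two rank-one tensors, the slice determinants of p in the
  three directions are nonnegative combinations u x + v y whose coefficient products u v are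
  products of two of the six 2x2 minors of the factor vectors. The product of the three
  coefficient products is a square, so one of them is nonnegative, and in that direction the
  slice determinants have the same sign.\<close>

definition nonneg_rank_le3 :: "tensor3 \<Rightarrow> bool" where
  "nonneg_rank_le3 p \<longleftrightarrow> (\<exists>a1 b1 c1 a2 b2 c2 a3 b3 c3.
      nonneg2 a1 \<and> nonneg2 b1 \<and> nonneg2 c1 \<and>
      nonneg2 a2 \<and> nonneg2 b2 \<and> nonneg2 c2 \<and>
      nonneg2 a3 \<and> nonneg2 b3 \<and> nonneg2 c3 \<and>
      p = (\<lambda>i j k. outer3 a1 b1 c1 i j k + outer3 a2 b2 c2 i j k + outer3 a3 b3 c3 i j k))"

lemma M33_eq: "M33 = {p \<in> simplex7. nonneg_rank_le3 p}"
  unfolding M33_def nonneg_rank_le3_def by (rule refl)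

lemma nonneg_rank_le3I:
  assumes "nonneg2 a1" "nonneg2 b1" "nonneg2 c1" "nonneg2 a2" "nonneg2 b2" "nonneg2 c2"
    "nonneg2 a3" "nonneg2 b3" "nonneg2 c3"
    and "\<And>i j k. p i j k = a1 i * b1 j * c1 k + a2 i * b2 j * c2 k + a3 i * b3 j * c3 k"
  shows "nonneg_rank_le3 p"
proof -
  have p: "p = (\<lambda>i j k. outer3 a1 b1 c1 i j k + outer3 a2 b2 c2 i j k + outer3 a3 b3 c3 i j k)"
    using assms(10) by (simp add: fun_eq_iff outer3_def)
  show ?thesis
    unfolding nonneg_rank_le3_def
    by (rule exI[of _ a1], rule exI[of _ b1], rule exI[of _ c1], rule exI[of _ a2],
        rule exI[of _ b2], rule exI[of _ c2], rule exI[of _ a3], rule exI[of _ b3],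
        rule exI[of _ c3]) (use assms(1-9) p in simp)
qed

lemma nonneg_rank_le3_swap12:
  assumes "nonneg_rank_le3 p" shows "nonneg_rank_le3 (\<lambda>i j k. p j i k)"
proof -
  from assms obtain a1 b1 c1 a2 b2 c2 a3 b3 c3 where
    "nonneg2 a1 \<and> nonneg2 b1 \<and> nonneg2 c1 \<and> nonneg2 a2 \<and> nonneg2 b2 \<and> nonneg2 c2 \<and>
     nonneg2 a3 \<and> nonneg2 b3 \<and> nonneg2 c3 \<and>
     p = (\<lambda>i j k. outer3 a1 b1 c1 i j k + outer3 a2 b2 c2 i j k + outer3 a3 b3 c3 i j k)"
    unfolding nonneg_rank_le3_def by (elim exE) (rule that)
  then show ?thesis
    by (intro nonneg_rank_le3I[of b1 a1 c1 b2 a2 c2 b3 a3 c3]) (simp_all add: outer3_def)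
qed

lemma nonneg_rank_le3_swap13:
  assumes "nonneg_rank_le3 p" shows "nonneg_rank_le3 (\<lambda>i j k. p k j i)"
proof -
  from assms obtain a1 b1 c1 a2 b2 c2 a3 b3 c3 where
    "nonneg2 a1 \<and> nonneg2 b1 \<and> nonneg2 c1 \<and> nonneg2 a2 \<and> nonneg2 b2 \<and> nonneg2 c2 \<and>
     nonneg2 a3 \<and> nonneg2 b3 \<and> nonneg2 c3 \<and>
     p = (\<lambda>i j k. outer3 a1 b1 c1 i j k + outer3 a2 b2 c2 i j k + outer3 a3 b3 c3 i j k)"
    unfolding nonneg_rank_le3_def by (elim exE) (rule that)
  then show ?thesis
    by (intro nonneg_rank_le3I[of c1 b1 a1 c2 b2 a2 c3 b3 a3]) (simp_all add: outer3_def)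
qed

lemma nonneg_rank_le3_flip3:
  assumes "nonneg_rank_le3 p" shows "nonneg_rank_le3 (\<lambda>i j k. p i j (\<not> k))"
proof -
  from assms obtain a1 b1 c1 a2 b2 c2 a3 b3 c3 where
    "nonneg2 a1 \<and> nonneg2 b1 \<and> nonneg2 c1 \<and> nonneg2 a2 \<and> nonneg2 b2 \<and> nonneg2 c2 \<and>
     nonneg2 a3 \<and> nonneg2 b3 \<and> nonneg2 c3 \<and>
     p = (\<lambda>i j k. outer3 a1 b1 c1 i j k + outer3 a2 b2 c2 i j k + outer3 a3 b3 c3 i j k)"
    unfolding nonneg_rank_le3_def by (elim exE) (rule that)
  then show ?thesis
    by (intro nonneg_rank_le3I[of a1 b1 "\<lambda>k. c1 (\<not> k)" a2 b2 "\<lambda>k. c2 (\<not> k)"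
          a3 b3 "\<lambda>k. c3 (\<not> k)"]) (simp_all add: outer3_def nonneg2_def)
qed

definition det2 :: "(bool \<Rightarrow> bool \<Rightarrow> real) \<Rightarrow> real" where
  "det2 M = M False False * M True True - M False True * M True False"

definition wedge2 :: "vec2 \<Rightarrow> vec2 \<Rightarrow> real" where
  "wedge2 x y = x False * y True - x True * y False"

lemma det2_hadamard:
  "det2 (\<lambda>j k. M j k * N j k) =
     det2 M * (N False True * N True False) + (M False False * M True True) * det2 N"
  unfolding det2_def by algebra

lemma det2_rank2:
  "det2 (\<lambda>j k. s * b j * c k + t * e j * f k) = s * t * wedge2 b e * wedge2 c f"
  unfolding det2_def wedge2_def by algebra

lemma nonneg_matrix_decomp_if_det2_nonneg:
  assumes nn: "\<And>j k. 0 \<le> P j k" and det: "0 \<le> det2 P"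
  shows "\<exists>t \<beta> \<gamma>. 0 \<le> t \<and> nonneg2 \<beta> \<and> nonneg2 \<gamma> \<and>
           (\<forall>j k. P j k = (if \<not> j \<and> \<not> k then t else 0) + \<beta> j * \<gamma> k)"
proof (cases "0 < P True True")
  case True
  let ?\<beta> = "\<lambda>j. if j then 1 else P False True / P True True"
  let ?\<gamma> = "\<lambda>k. if k then P True True else P True False"
  have "P j k = (if \<not> j \<and> \<not> k then det2 P / P True True else 0) + ?\<beta> j * ?\<gamma> k" for j k
    using True by (cases j; cases k) (simp_all add: det2_def field_simps)
  moreover have "nonneg2 ?\<beta>" "nonneg2 ?\<gamma>"
    using nn True by (simp_all add: nonneg2_def)
  moreover have "0 \<le> det2 P / P True True"
    using det True by simp
  ultimately show ?thesis by blast
next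
  case False
  with nn have P11: "P True True = 0" by (meson antisym not_le)
  with det have "P False True * P True False \<le> 0" by (simp add: det2_def)
  with nn have "P False True = 0 \<or> P True False = 0"
    by (meson antisym mult_nonneg_nonneg mult_eq_0_iff)
  then show ?thesis
  proof
    assume "P False True = 0"
    with nn P11 show ?thesis
      by (intro exI[of _ "P False False"] exI[of _ "\<lambda>j. if j then 1 else 0"]
          exI[of _ "\<lambda>k. if k then 0 else P True False"]) (simp add: nonneg2_def all_bool_eq)
  next
    assume "P True False = 0"
    with nn P11 show ?thesis
      by (intro exI[of _ "P False False"] exI[of _ "\<lambda>j. if j then 0 else 1"]
          exI[of _ "\<lambda>k. if k then P False True else 0"]) (simp add: nonneg2_def all_bool_eq)
  qed
qed

lemma nonneg_rank_le3_if_slice_det2_nonneg: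
  assumes nn: "\<And>i j k. 0 \<le> p i j k" and "0 \<le> det2 (p False)" "0 \<le> det2 (p True)"
  shows "nonneg_rank_le3 p"
proof -
  obtain t0 \<beta>0 \<gamma>0 where "0 \<le> t0" "nonneg2 \<beta>0" "nonneg2 \<gamma>0"
    and p0: "\<forall>j k. p False j k = (if \<not> j \<and> \<not> k then t0 else 0) + \<beta>0 j * \<gamma>0 k"
    using nonneg_matrix_decomp_if_det2_nonneg[of "p False"] nn assms(2) by blast
  moreover obtain t1 \<beta>1 \<gamma>1 where "0 \<le> t1" "nonneg2 \<beta>1" "nonneg2 \<gamma>1"
    and p1: "\<forall>j k. p True j k = (if \<not> j \<and> \<not> k then t1 else 0) + \<beta>1 j * \<gamma>1 k"
    using nonneg_matrix_decomp_if_det2_nonneg[of "p True"] nn assms(3) by blast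
  moreover have "p i j k = (if i then t1 else t0) * (if j then 0 else 1) * (if k then 0 else 1)
      + (if i then 0 else 1) * \<beta>0 j * \<gamma>0 k + (if i then 1 else 0) * \<beta>1 j * \<gamma>1 k" for i j k
    using p0 p1 by (cases i) simp_all
  ultimately show ?thesis
    by (intro nonneg_rank_le3I[of "\<lambda>i. if i then t1 else t0" "\<lambda>j. if j then 0 else 1"
          "\<lambda>k. if k then 0 else 1" "\<lambda>i. if i then 0 else 1" \<beta>0 \<gamma>0
          "\<lambda>i. if i then 1 else 0" \<beta>1 \<gamma>1]) (simp_all add: nonneg2_def)
qed

lemma nonneg_rank_le3_if_slice_det2_same_sign:
  assumes nn: "\<And>i j k. 0 \<le> p i j k" and same_sign: "0 \<le> det2 (p False) * det2 (p True)"
  shows "nonneg_rank_le3 p"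
proof -
  from same_sign consider "0 \<le> det2 (p False)" "0 \<le> det2 (p True)"
    | "det2 (p False) \<le> 0" "det2 (p True) \<le> 0"
    by (auto simp: zero_le_mult_iff)
  then show ?thesis
  proof cases
    case 1
    with nn show ?thesis by (rule nonneg_rank_le3_if_slice_det2_nonneg)
  next
    case 2
    let ?q = "\<lambda>i j k. p i j (\<not> k)"
    have "det2 (?q i) = - det2 (p i)" for i by (simp add: det2_def)
    with 2 nn have "nonneg_rank_le3 ?q" by (intro nonneg_rank_le3_if_slice_det2_nonneg) simp_all
    from nonneg_rank_le3_flip3[OF this] show ?thesis by simp
  qed
qed

lemma nonneg_combinations_same_sign:
  fixes u v x0 y0 x1 y1 :: real
  assumes "0 \<le> u * v" "0 \<le> x0" "0 \<le> y0" "0 \<le> x1" "0 \<le> y1"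
  shows "0 \<le> (u * x0 + v * y0) * (u * x1 + v * y1)"
proof -
  have "(u * x0 + v * y0) * (u * x1 + v * y1) =
      u\<^sup>2 * (x0 * x1) + (u * v) * (x0 * y1 + y0 * x1) + v\<^sup>2 * (y0 * y1)"
    by algebra
  also have "0 \<le> \<dots>" using assms by simp
  finally show ?thesis .
qed

definition rank2_tensor :: "vec2 \<Rightarrow> vec2 \<Rightarrow> vec2 \<Rightarrow> vec2 \<Rightarrow> vec2 \<Rightarrow> vec2 \<Rightarrow> tensor3" where
  "rank2_tensor a b c d e f = (\<lambda>i j k. outer3 a b c i j k + outer3 d e f i j k)"

lemma rank2_tensor_nonneg:
  assumes "nonneg2 a" "nonneg2 b" "nonneg2 c" "nonneg2 d" "nonneg2 e" "nonneg2 f"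
  shows "0 \<le> rank2_tensor a b c d e f i j k"
  using assms by (simp add: rank2_tensor_def outer3_def nonneg2_def)

lemma det2_slice_rank2_tensor:
  "det2 (rank2_tensor a b c d e f i) = a i * d i * wedge2 b e * wedge2 c f"
  using det2_rank2[of "a i" b c "d i" e f] by (simp add: rank2_tensor_def outer3_def)

lemma rbm_nonneg_rank_le3_if_minors_same_sign:
  assumes nn: "nonneg2 a1" "nonneg2 b1" "nonneg2 c1" "nonneg2 d1" "nonneg2 e1" "nonneg2 f1"
    "nonneg2 a2" "nonneg2 b2" "nonneg2 c2" "nonneg2 d2" "nonneg2 e2" "nonneg2 f2"
    and minors: "0 \<le> (wedge2 b1 e1 * wedge2 c1 f1) * (wedge2 b2 e2 * wedge2 c2 f2)"
  shows "nonneg_rank_le3 (\<lambda>i j k. rank2_tensor a1 b1 c1 d1 e1 f1 i j k *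
                                  rank2_tensor a2 b2 c2 d2 e2 f2 i j k)"
proof (rule nonneg_rank_le3_if_slice_det2_same_sign)
  let ?q1 = "rank2_tensor a1 b1 c1 d1 e1 f1" and ?q2 = "rank2_tensor a2 b2 c2 d2 e2 f2"
  have q_nonneg: "0 \<le> ?q1 i j k" "0 \<le> ?q2 i j k" for i j k
    using nn by (simp_all add: rank2_tensor_nonneg)
  then show "0 \<le> ?q1 i j k * ?q2 i j k" for i j k by simp
  define x where "x i = a1 i * d1 i * (?q2 i False True * ?q2 i True False)" for i
  define y where "y i = a2 i * d2 i * (?q1 i False False * ?q1 i True True)" for i
  have "0 \<le> x i" "0 \<le> y i" for i
    using nn q_nonneg unfolding x_def y_def nonneg2_def by (simp_all add: mult_nonneg_nonneg)
  moreover have "det2 (\<lambda>j k. ?q1 i j k * ?q2 i j k) =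
      (wedge2 b1 e1 * wedge2 c1 f1) * x i + (wedge2 b2 e2 * wedge2 c2 f2) * y i" for i
    unfolding x_def y_def by (simp add: det2_hadamard det2_slice_rank2_tensor algebra_simps)
  ultimately show "0 \<le> det2 (\<lambda>j k. ?q1 False j k * ?q2 False j k) *
                      det2 (\<lambda>j k. ?q1 True j k * ?q2 True j k)"
    using nonneg_combinations_same_sign[OF minors] by simp
qed

lemma one_of_three_nonneg_if_prod_nonneg:
  fixes x y z :: real
  assumes "0 \<le> x * y * z"
  shows "0 \<le> x \<or> 0 \<le> y \<or> 0 \<le> z"
  using assms by (metis mult_neg_neg mult_pos_neg not_le)

lemma rbm_nonneg_rank_le3:
  assumes nn: "nonneg2 a1" "nonneg2 b1" "nonneg2 c1" "nonneg2 d1" "nonneg2 e1" "nonneg2 f1"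
    "nonneg2 a2" "nonneg2 b2" "nonneg2 c2" "nonneg2 d2" "nonneg2 e2" "nonneg2 f2"
  shows "nonneg_rank_le3 (\<lambda>i j k. rank2_tensor a1 b1 c1 d1 e1 f1 i j k *
                                  rank2_tensor a2 b2 c2 d2 e2 f2 i j k)"
    (is "nonneg_rank_le3 ?p")
proof -
  let ?A = "(wedge2 b1 e1 * wedge2 c1 f1) * (wedge2 b2 e2 * wedge2 c2 f2)"
    and ?B = "(wedge2 a1 d1 * wedge2 c1 f1) * (wedge2 a2 d2 * wedge2 c2 f2)"
    and ?C = "(wedge2 b1 e1 * wedge2 a1 d1) * (wedge2 b2 e2 * wedge2 a2 d2)"
  have "?A * ?B * ?C =
      (wedge2 a1 d1 * wedge2 b1 e1 * wedge2 c1 f1 * wedge2 a2 d2 * wedge2 b2 e2 * wedge2 c2 f2)\<^sup>2"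
    by algebra
  then have "0 \<le> ?A * ?B * ?C" by (simp only: zero_le_power2)
  then consider "0 \<le> ?A" | "0 \<le> ?B" | "0 \<le> ?C"
    using one_of_three_nonneg_if_prod_nonneg by blast
  then show ?thesis
  proof cases
    case 1
    with nn show ?thesis by (rule rbm_nonneg_rank_le3_if_minors_same_sign)
  next
    case 2
    have "(\<lambda>i j k. ?p j i k) = (\<lambda>i j k. rank2_tensor b1 a1 c1 e1 d1 f1 i j k *
                                        rank2_tensor b2 a2 c2 e2 d2 f2 i j k)"
      by (simp add: rank2_tensor_def outer3_def mult_ac)
    moreover from 2 nn have "nonneg_rank_le3 \<dots>"
      by (intro rbm_nonneg_rank_le3_if_minors_same_sign) simp_all
    ultimately have "nonneg_rank_le3 (\<lambda>i j k. ?p j i k)" by simp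
    from nonneg_rank_le3_swap12[OF this] show ?thesis by simp
  next
    case 3
    have "(\<lambda>i j k. ?p k j i) = (\<lambda>i j k. rank2_tensor c1 b1 a1 f1 e1 d1 i j k *
                                        rank2_tensor c2 b2 a2 f2 e2 d2 i j k)"
      by (simp add: rank2_tensor_def outer3_def mult_ac)
    moreover from 3 nn have "nonneg_rank_le3 \<dots>"
      by (intro rbm_nonneg_rank_le3_if_minors_same_sign) simp_all
    ultimately have "nonneg_rank_le3 (\<lambda>i j k. ?p k j i)" by simp
    from nonneg_rank_le3_swap13[OF this] show ?thesis by simp
  qed
qed

theorem mainTheorem4:
  shows "RBM32 \<subseteq> M33"
proof
  fix p assume p: "p \<in> RBM32"
  then have "\<exists>a1 b1 c1 d1 e1 f1 a2 b2 c2 d2 e2 f2.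
      nonneg2 a1 \<and> nonneg2 b1 \<and> nonneg2 c1 \<and> nonneg2 d1 \<and> nonneg2 e1 \<and> nonneg2 f1 \<and>
      nonneg2 a2 \<and> nonneg2 b2 \<and> nonneg2 c2 \<and> nonneg2 d2 \<and> nonneg2 e2 \<and> nonneg2 f2 \<and>
      p = (\<lambda>i j k. rank2_tensor a1 b1 c1 d1 e1 f1 i j k * rank2_tensor a2 b2 c2 d2 e2 f2 i j k)"
    unfolding RBM32_def rank2_tensor_def mem_Collect_eq by (rule conjunct2)
  then obtain a1 b1 c1 d1 e1 f1 a2 b2 c2 d2 e2 f2 where
      "nonneg2 a1 \<and> nonneg2 b1 \<and> nonneg2 c1 \<and> nonneg2 d1 \<and> nonneg2 e1 \<and> nonneg2 f1 \<and>
      nonneg2 a2 \<and> nonneg2 b2 \<and> nonneg2 c2 \<and> nonneg2 d2 \<and> nonneg2 e2 \<and> nonneg2 f2 \<and>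
      p = (\<lambda>i j k. rank2_tensor a1 b1 c1 d1 e1 f1 i j k * rank2_tensor a2 b2 c2 d2 e2 f2 i j k)"
    by (elim exE) (rule that)
  then have "nonneg_rank_le3 p" by (simp add: rbm_nonneg_rank_le3)
  moreover from p have "p \<in> simplex7" by (simp add: RBM32_def)
  ultimately show "p \<in> M33" by (simp add: M33_eq)
qed

end
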